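(* Consider BPSK transmission of a binary linear code $\mathcal{C}$ of length $n$ over an AWGN channel, ML decoding with error event $E$, the all-zero codeword transmitted, and a family of regions $\{\mathcal{R}(r), r\in\mathcal{I}\}$ satisfying assumptions A1–A2 of the context with pdf $g$ of $R$. Let $f_u$ be the conditional union bound $$ f_u(r)=\sum_{1\le d\le n} A_d\,p_2(r,d), $$ where $\{A_d\}$ is the weight distribution of $\mathcal{C}$ and $p_2(r,d)$ is the conditional pairwise error probability defined in the context. Suppose that, conditional on $\underline y\in\partial\mathcal{R}(r)$, $\underline y$ is uniformly distributed over $\partial\mathcal{R}(r)$. If $f_u(r)$ is a non-decreasing and continuous function of $r$, then the optimal parameter $r_1$ minimizing over $r^*$ the bound $\int_{-\infty}^{r^*} f_u(r)g(r)\,{\rm d}r+\int_{r^*}^{+\infty} g(r)\,{\rm d}r$ does not depend on the SNR but only on the weight spectrum of the code.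
   Context: System model: codeword bits $c_t$ are mapped to $s_t=1-2c_t$; $\underline y=\underline s+\underline z$ with $\underline z$ i.i.d. $\mathcal{N}(0,\sigma^2)$ (SNR determined by $\sigma$); ML decoding chooses the nearest signal vector; the all-zero codeword's image $\underline s^{(0)}$ is transmitted. (A1) $\mathcal{R}(r_1)\subset\mathcal{R}(r_2)$ for $r_1<r_2$; boundaries $\partial\mathcal{R}(r)$ pairwise disjoint with union over $r\in\mathcal{I}$ equal to $\mathbb{R}^n$. (A2) $R:\underline y\mapsto r$ for $\underline y\in\partial\mathcal{R}(r)$ has pdf $g(r)$ ($g\equiv0$ outside $\mathcal{I}$). For $\underline s^{(1)}$ the image of a weight-$d$ codeword, $p_2(r,d)={\rm Pr}\{\|\underline y-\underline s^{(1)}\|\le\|\underline y-\underline s^{(0)}\|\mid\underline y\in\partial\mathcal{R}(r)\}$ (this depends only on $d$ by symmetry). $f_u$ is assumed non-trivial: $f_u(r)\le1$ for some $r$. *)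

theory Defs
  imports "HOL-Probability.Probability"
begin

text \<open>Binary words of length n = CARD('n); True stands for bit 1.\<close>

definition zero_word :: "bool ^ 'n" where
  "zero_word = (\<chi> i. False)"

definition xor_word :: "bool ^ 'n \<Rightarrow> bool ^ 'n \<Rightarrow> bool ^ 'n" where
  "xor_word a b = (\<chi> i. a $ i \<noteq> b $ i)"

definition binary_linear_code :: "(bool ^ 'n) set \<Rightarrow> bool" where
  "binary_linear_code C \<longleftrightarrow> zero_word \<in> C \<and> (\<forall>a\<in>C. \<forall>b\<in>C. xor_word a b \<in> C)"

definition hweight :: "bool ^ 'n \<Rightarrow> nat" where
  "hweight c = card {i. c $ i}"

definition weight_dist :: "(bool ^ 'n) set \<Rightarrow> nat \<Rightarrow> nat" where
  "weight_dist C d = card {c \<in> C. hweight c = d}"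

definition bpsk :: "bool ^ 'n \<Rightarrow> real ^ 'n" where
  "bpsk c = (\<chi> i. if c $ i then -1 else 1)"

definition awgn_output :: "real \<Rightarrow> real ^ 'n \<Rightarrow> (real ^ 'n) measure" where
  "awgn_output \<sigma> s = density lborel (\<lambda>y. ennreal (\<Prod>i\<in>UNIV. normal_density (s $ i) \<sigma> (y $ i)))"

definition pairwise_err :: "bool ^ 'n \<Rightarrow> (real ^ 'n) set" where
  "pairwise_err c = {y. dist y (bpsk c) \<le> dist y (bpsk (zero_word :: bool ^ 'n))}"

text \<open>Conditional pairwise error probability p_2(r,d), where U r is the conditional
  law of y given y in the boundary of R(r) (a representative codeword of weight d is used).\<close>
definition p2 :: "(real \<Rightarrow> (real ^ 'n) measure) \<Rightarrow> (bool ^ 'n) set \<Rightarrow> real \<Rightarrow> nat \<Rightarrow> real" where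
  "p2 U C r d = measure (U r) (pairwise_err (SOME c. c \<in> C \<and> hweight c = d))"

definition cond_union_bound :: "(real \<Rightarrow> (real ^ 'n) measure) \<Rightarrow> (bool ^ 'n) set \<Rightarrow> real \<Rightarrow> real" where
  "cond_union_bound U C r = (\<Sum>d = 1..CARD('n). real (weight_dist C d) * p2 U C r d)"

definition ub_bound :: "(real \<Rightarrow> real) \<Rightarrow> (real \<Rightarrow> real) \<Rightarrow> ereal \<Rightarrow> real" where
  "ub_bound f g t = (\<integral>r\<in>{r. ereal r \<le> t}. f r * g r \<partial>lborel) + (\<integral>r\<in>{r. t < ereal r}. g r \<partial>lborel)"

end

theory Submission imports Defs begin

text \<open>Write the bound at threshold t as  \<integral> g + \<integral>_{r \<le> t} (f_u r - 1) g r.  Since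
  g \<ge> 0, the second integrand is \<le> 0 where f_u \<le> 1 and \<ge> 0 where f_u > 1, and by
  monotonicity of f_u the set {f_u \<le> 1} is an initial segment of I. Hence the bound is
  minimal at the supremum r_1 of that segment, whatever the density g is. As g is the only
  quantity depending on the SNR, while f_u is built from the weight spectrum and the
  conditional law on the boundaries, r_1 does not depend on the SNR.\<close>

lemma prob_space_awgn_output:
  fixes s :: "real ^ 'n"
  assumes "\<sigma> > 0"
  shows "prob_space (awgn_output \<sigma> s)"
proof -
  have inj_axis: "inj (\<lambda>i::'n. axis i (1::real))"
    by (auto simp: inj_def axis_eq_axis)
  have product_over_Basis: "(\<Prod>i\<in>UNIV. normal_density (s $ i) \<sigma> (y $ i))
      = (\<Prod>b\<in>Basis. normal_density (s \<bullet> b) \<sigma> (y \<bullet> b))" for y :: "real ^ 'n"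
  proof -
    have Basis_axis: "(Basis :: (real ^ 'n) set) = range (\<lambda>i. axis i 1)"
      by (auto simp: Basis_vec_def)
    show ?thesis
      unfolding Basis_axis by (subst prod.reindex[OF inj_axis]) (simp add: inner_axis)
  qed
  have "(\<integral>\<^sup>+y. ennreal (\<Prod>i\<in>UNIV. normal_density (s $ i) \<sigma> (y $ i)) \<partial>lborel)
      = (\<integral>\<^sup>+y. (\<Prod>b\<in>Basis. ennreal (normal_density (s \<bullet> b) \<sigma> (y \<bullet> b))) \<partial>lborel)"
    unfolding product_over_Basis by (simp add: prod_ennreal)
  also have "\<dots> = (\<Prod>b\<in>Basis. \<integral>\<^sup>+x. ennreal (normal_density (s \<bullet> b) \<sigma> x) \<partial>lborel)"
    by (rule nn_integral_lborel_prod) auto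
  also have "\<dots> = 1"
    using assms by (simp add: nn_integral_eq_integral)
  finally show ?thesis
    unfolding awgn_output_def by (intro prob_spaceI) (simp add: emeasure_density)
qed

lemma integrable_bounded_mult:
  fixes f g :: "'a \<Rightarrow> real"
  assumes "f \<in> borel_measurable M" and "\<And>x. \<bar>f x\<bar> \<le> B" and "integrable M g"
  shows "integrable M (\<lambda>x. f x * g x)"
proof (rule Bochner_Integration.integrable_bound)
  show "integrable M (\<lambda>x. B * g x)"
    using assms(3) by simp
  show "(\<lambda>x. f x * g x) \<in> borel_measurable M"
    using assms(1,3) by measurable
  have "0 \<le> B" using assms(2) order_trans abs_ge_zero by blast
  then show "AE x in M. norm (f x * g x) \<le> norm (B * g x)"
    using mult_right_mono[OF assms(2) abs_ge_zero] by (simp add: abs_mult)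
qed

lemma integrable_density_of_distributed:
  fixes G :: "real \<Rightarrow> real"
  assumes "prob_space M" and "distributed M lborel X (\<lambda>r. ennreal (G r))" and "\<And>r. 0 \<le> G r"
  shows "integrable lborel G"
proof -
  interpret prob_space M by fact
  show ?thesis
    using distributed_integrable[OF assms(2), of "\<lambda>_. 1"] assms(3) by simp
qed

lemma borel_measurable_cond_union_bound:
  assumes "\<forall>A\<in>sets borel. (\<lambda>r. measure (U r) A) \<in> borel_measurable borel"
  shows "cond_union_bound U C \<in> borel_measurable borel"
proof -
  have "pairwise_err c \<in> sets borel" for c :: "bool ^ 'n"
    unfolding pairwise_err_def by measurable
  then have "(\<lambda>r. p2 U C r d) \<in> borel_measurable borel" for d
    unfolding p2_def using assms by blast
  then show ?thesis
    unfolding cond_union_bound_def by measurable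
qed

lemma abs_cond_union_bound_le:
  fixes C :: "(bool ^ 'n) set"
  assumes "prob_space (U r)"
  shows "\<bar>cond_union_bound U C r\<bar> \<le> (\<Sum>d = 1..CARD('n). real (weight_dist C d))"
proof -
  interpret prob_space "U r" by fact
  have p2_bounds: "0 \<le> p2 U C r d" "p2 U C r d \<le> 1" for d
    unfolding p2_def by simp_all
  have "0 \<le> cond_union_bound U C r"
    unfolding cond_union_bound_def using p2_bounds by (intro sum_nonneg) auto
  moreover have "cond_union_bound U C r \<le> (\<Sum>d = 1..CARD('n). real (weight_dist C d))"
    unfolding cond_union_bound_def
    by (intro sum_mono) (use p2_bounds in \<open>auto intro: mult_left_le\<close>)
  ultimately show ?thesis by simp
qed

lemma ub_bound_eq_integral_add:
  fixes f G :: "real \<Rightarrow> real"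
  assumes G: "integrable lborel G" and fG: "integrable lborel (\<lambda>r. f r * G r)"
  shows "ub_bound f G t = (\<integral>r. G r \<partial>lborel)
           + (\<integral>r. indicator {r. ereal r \<le> t} r * ((f r - 1) * G r) \<partial>lborel)"
proof -
  have below: "{r. ereal r \<le> t} \<in> sets lborel" and above: "{r. t < ereal r} \<in> sets lborel"
    by measurable
  have i_below: "integrable lborel (\<lambda>r. indicator {r. ereal r \<le> t} r * (f r * G r))"
    using integrable_real_mult_indicator[OF below fG] by (simp add: mult.commute)
  have i_above: "integrable lborel (\<lambda>r. indicator {r. t < ereal r} r * G r)"
    using integrable_real_mult_indicator[OF above G] by (simp add: mult.commute)
  have i_diff: "integrable lborel (\<lambda>r. indicator {r. ereal r \<le> t} r * ((f r - 1) * G r))"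
    using integrable_real_mult_indicator[OF below Bochner_Integration.integrable_diff[OF fG G]]
    by (simp add: algebra_simps)
  have "ub_bound f G t = (\<integral>r. indicator {r. ereal r \<le> t} r * (f r * G r)
                              + indicator {r. t < ereal r} r * G r \<partial>lborel)"
    unfolding ub_bound_def set_lebesgue_integral_def
    by (simp add: Bochner_Integration.integral_add[OF i_below i_above])
  also have "\<dots> = (\<integral>r. G r + indicator {r. ereal r \<le> t} r * ((f r - 1) * G r) \<partial>lborel)"
    by (rule Bochner_Integration.integral_cong) (auto simp: indicator_def algebra_simps)
  also have "\<dots> = (\<integral>r. G r \<partial>lborel)
                 + (\<integral>r. indicator {r. ereal r \<le> t} r * ((f r - 1) * G r) \<partial>lborel)"
    by (rule Bochner_Integration.integral_add[OF G i_diff])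
  finally show ?thesis .
qed

lemma mono_on_le_below_Sup_sublevel:
  fixes f :: "real \<Rightarrow> real"
  assumes "mono_on I f" and "r \<in> I" and "ereal r < Sup {ereal s | s. s \<in> I \<and> f s \<le> c}"
  shows "f r \<le> c"
proof -
  obtain s where s: "s \<in> I" "f s \<le> c" "r < s"
    using assms(3) by (auto simp: less_Sup_iff)
  then have "f r \<le> f s"
    using assms(1,2) by (auto simp: mono_on_def)
  with s show ?thesis by simp
qed

lemma gt_above_Sup_sublevel:
  fixes f :: "real \<Rightarrow> real"
  assumes "r \<in> I" and "Sup {ereal s | s. s \<in> I \<and> f s \<le> c} < ereal r"
  shows "c < f r"
proof (rule ccontr)
  assume "\<not> c < f r"
  with assms(1) have "ereal r \<le> Sup {ereal s | s. s \<in> I \<and> f s \<le> c}"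
    by (intro Sup_upper) auto
  with assms(2) show False by simp
qed

lemma ub_bound_Sup_sublevel_le:
  fixes f G :: "real \<Rightarrow> real"
  assumes G: "integrable lborel G" and fG: "integrable lborel (\<lambda>r. f r * G r)"
    and G_nonneg: "\<And>r. 0 \<le> G r" and G_outside: "\<And>r. r \<notin> I \<Longrightarrow> G r = 0"
    and mono: "mono_on I f"
  shows "ub_bound f G (Sup {ereal r | r. r \<in> I \<and> f r \<le> 1}) \<le> ub_bound f G t"
proof -
  define r1 where "r1 = Sup {ereal r | r. r \<in> I \<and> f r \<le> 1}"
  let ?h = "\<lambda>t r. indicator {r. ereal r \<le> t} r * ((f r - 1) * G r)"
  have h_integrable: "integrable lborel (?h t)" for t
  proof -
    have "{r. ereal r \<le> t} \<in> sets lborel" by measurable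
    from integrable_real_mult_indicator[OF this Bochner_Integration.integrable_diff[OF fG G]]
    show ?thesis by (simp add: algebra_simps)
  qed
  \<comment> \<open>The point r1 itself is a null set, so it may be ignored.\<close>
  have "AE r in lborel. ?h r1 r \<le> ?h t r"
    using AE_lborel_singleton[of "real_of_ereal r1"]
  proof eventually_elim
    case (elim r)
    then have "ereal r \<noteq> r1" by (cases r1) auto
    then consider "r \<notin> I" | "r \<in> I" "ereal r < r1" | "r \<in> I" "r1 < ereal r"
      by fastforce
    then show ?case
    proof cases
      case 2
      then have "(f r - 1) * G r \<le> 0"
        using mono_on_le_below_Sup_sublevel[OF mono] G_nonneg[of r]
        by (simp add: r1_def mult_nonpos_nonneg)
      with 2 show ?thesis by (auto simp: indicator_def)
    next
      case 3
      then have "0 \<le> (f r - 1) * G r"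
        using gt_above_Sup_sublevel[of r I f 1] G_nonneg[of r] by (simp add: r1_def)
      with 3 show ?thesis by (auto simp: indicator_def)
    qed (simp add: G_outside)
  qed
  then have "(\<integral>r. ?h r1 r \<partial>lborel) \<le> (\<integral>r. ?h t r \<partial>lborel)"
    by (intro integral_mono_AE h_integrable)
  then show ?thesis
    by (simp add: ub_bound_eq_integral_add[OF G fG] r1_def)
qed

theorem theorem3:
  fixes C :: "(bool ^ 'n) set"
    and Rf :: "real ^ 'n \<Rightarrow> real"
    and I :: "real set"
    and g :: "real \<Rightarrow> real \<Rightarrow> real"
    and U :: "real \<Rightarrow> (real ^ 'n) measure"
  assumes code: "binary_linear_code C"
    and A1: "\<forall>y. Rf y \<in> I"
    and A2: "\<forall>\<sigma>>0. distributed (awgn_output \<sigma> (bpsk zero_word)) lborel Rf (\<lambda>r. ennreal (g \<sigma> r))"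
    and g_nonneg: "\<forall>\<sigma>>0. \<forall>r. 0 \<le> g \<sigma> r"
    and g_zero: "\<forall>\<sigma>>0. \<forall>r. r \<notin> I \<longrightarrow> g \<sigma> r = 0"
    and U_prob: "\<forall>r. prob_space (U r) \<and> sets (U r) = sets borel"
    and U_meas: "\<forall>A\<in>sets borel. (\<lambda>r. measure (U r) A) \<in> borel_measurable borel"
    and U_on_boundary: "\<forall>r\<in>I. measure (U r) (Rf -` {r}) = 1"
    and U_cond: "\<forall>\<sigma>>0. \<forall>A\<in>sets borel.
        measure (awgn_output \<sigma> (bpsk zero_word)) A = (\<integral>r. g \<sigma> r * measure (U r) A \<partial>lborel)"
    and nontriv: "\<exists>r\<in>I. cond_union_bound U C r \<le> 1"
    and mono: "mono_on I (cond_union_bound U C)"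
    and cont: "continuous_on I (cond_union_bound U C)"
  shows "\<exists>r1 :: ereal. r1 = Sup {ereal r | r. r \<in> I \<and> cond_union_bound U C r \<le> 1} \<and>
           (\<forall>\<sigma>>0. \<forall>t :: ereal.
              ub_bound (cond_union_bound U C) (g \<sigma>) r1 \<le> ub_bound (cond_union_bound U C) (g \<sigma>) t)"
proof -
  have "ub_bound (cond_union_bound U C) (g \<sigma>) (Sup {ereal r | r. r \<in> I \<and> cond_union_bound U C r \<le> 1})
          \<le> ub_bound (cond_union_bound U C) (g \<sigma>) t" if "\<sigma> > 0" for \<sigma> t
  proof -
    have g_integrable: "integrable lborel (g \<sigma>)"
      using A2 g_nonneg prob_space_awgn_output \<open>\<sigma> > 0\<close>
      by (blast intro: integrable_density_of_distributed)
    have "integrable lborel (\<lambda>r. cond_union_bound U C r * g \<sigma> r)"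
      using borel_measurable_cond_union_bound[OF U_meas] abs_cond_union_bound_le[where C=C] U_prob
      by (intro integrable_bounded_mult[OF _ _ g_integrable]) auto
    then show ?thesis
      using \<open>\<sigma> > 0\<close> g_nonneg g_zero
      by (intro ub_bound_Sup_sublevel_le[OF g_integrable _ _ _ mono]) auto
  qed
  then show ?thesis by blast
qed

end
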